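(* (Homomorphism Theorem) Let $\mathbf L_1=(L_1,\vee,\wedge)$ and $\mathbf L_2=(L_2,\vee,\wedge)$ be partial lattices and $h$ a closed homomorphism from $\mathbf L_1$ to $\mathbf L_2$. Then $\ker h\in\operatorname{Con}\mathbf L_1$. If, in addition, $[0_{\mathbf L_1^*}]\Theta(\ker h)=\{0_{\mathbf L_1^*}\}$ provided $0_{\mathbf L_1^*}\in L_1^*$, and $[1_{\mathbf L_1^*}]\Theta(\ker h)=\{1_{\mathbf L_1^*}\}$ provided $1_{\mathbf L_1^*}\in L_1^*$, then $(h(L_1),\vee,\wedge)$, with partial operations as in $\mathbf L_2$ (i.e. $h(a)\vee h(b)$ is defined iff it is defined in $\mathbf L_2$, with the same value, and likewise for $\wedge$), is a partial lattice isomorphic to $\mathbf L_1/(\ker h)$, via $h(x)\mapsto[x]\ker h$.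
   Context: A partial lattice is a set $L$ with two partial binary operations $\vee,\wedge$ satisfying strong idempotency, commutativity and associativity (for every assignment, one side is defined iff the other is, and then they are equal) and the duality conditions: if $a\vee b$ is defined and equals $a$ then $a\wedge b$ is defined and equals $b$, and dually. Its induced order is $x\leq y$ iff $x\vee y$ is defined and equals $y$. The two-point extension $\mathbf L^*=(L^*,\leq^* )$, with new elements $0_{\mathbf L^*},1_{\mathbf L^*}\notin L$: $L^*$ is $L$ together with a new top element $1_{\mathbf L^*}$ if $\vee$ is not everywhere defined and a new bottom element $0_{\mathbf L^*}$ if $\wedge$ is not everywhere defined; $\leq^*$ extends $\leq$ by putting the new bottom below and the new top above all elements; it is a lattice with operations $\vee^*=\sup_{\leq^*}$, $\wedge^*=\inf_{\leq^*}$. A congruence on $\mathbf L$ is an equivalence relation $E$ on $L$ with $\Theta(E)\cap L^2=E$, where $\Theta(E)$ is the lattice congruence on $\mathbf L^*$ generated by $E$; $\operatorname{Con}\mathbf L$ is the set of these. For $E\in\operatorname{Con}\mathbf L$, $\mathbf L/E=(L/E,\vee,\wedge)$ with $[x]E\vee[y]E:=[x\vee^*y]\Theta(E)\cap L$ if this set is non-empty, undefined otherwise, and dually for $\wedge$. A homomorphism of partial algebras is a map $h$ such that whenever $f(a_1,\dots,a_n)$ is defined, $f(h(a_1),\dots,h(a_n))$ is defined and equals $h(f(a_1,\dots,a_n))$; it is closed if additionally definedness of $f(h(a_1),\dots,h(a_n))$ implies definedness of $f(a_1,\dots,a_n)$. An isomorphism is a bijective closed homomorphism. $\ker h=\{(x,y):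 h(x)=h(y)\}$. *)

theory Defs
  imports Main
begin

(* A partial binary operation on a carrier L is modelled as  'a => 'a => 'a option ;
   None = undefined.  Only arguments from L matter. *)

definition partial_lattice :: "'a set \<Rightarrow> ('a \<Rightarrow> 'a \<Rightarrow> 'a option) \<Rightarrow> ('a \<Rightarrow> 'a \<Rightarrow> 'a option) \<Rightarrow> bool" where
  "partial_lattice L j m \<longleftrightarrow>
     (\<forall>a\<in>L. \<forall>b\<in>L. \<forall>c. (j a b = Some c \<longrightarrow> c \<in> L) \<and> (m a b = Some c \<longrightarrow> c \<in> L)) \<and>
     (\<forall>a\<in>L. j a a = Some a \<and> m a a = Some a) \<and>
     (\<forall>a\<in>L. \<forall>b\<in>L. j a b = j b a \<and> m a b = m b a) \<and>
     (\<forall>a\<in>L. \<forall>b\<in>L. \<forall>c\<in>L.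
        Option.bind (j a b) (\<lambda>d. j d c) = Option.bind (j b c) (\<lambda>d. j a d) \<and>
        Option.bind (m a b) (\<lambda>d. m d c) = Option.bind (m b c) (\<lambda>d. m a d)) \<and>
     (\<forall>a\<in>L. \<forall>b\<in>L. (j a b = Some a \<longrightarrow> m a b = Some b) \<and> (m a b = Some a \<longrightarrow> j a b = Some b))"

datatype 'a ext = Elem 'a | Bot | Top

definition op_total :: "'a set \<Rightarrow> ('a \<Rightarrow> 'a \<Rightarrow> 'a option) \<Rightarrow> bool" where
  "op_total L f \<longleftrightarrow> (\<forall>a\<in>L. \<forall>b\<in>L. f a b \<noteq> None)"

definition ext_carrier :: "'a set \<Rightarrow> ('a \<Rightarrow> 'a \<Rightarrow> 'a option) \<Rightarrow> ('a \<Rightarrow> 'a \<Rightarrow> 'a option) \<Rightarrow> 'a ext set" where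
  "ext_carrier L j m = Elem ` L \<union> (if op_total L j then {} else {Top})
                                  \<union> (if op_total L m then {} else {Bot})"

fun ext_le :: "('a \<Rightarrow> 'a \<Rightarrow> 'a option) \<Rightarrow> 'a ext \<Rightarrow> 'a ext \<Rightarrow> bool" where
  "ext_le j Bot y = True"
| "ext_le j x Top = True"
| "ext_le j (Elem a) (Elem b) = (j a b = Some b)"
| "ext_le j _ _ = False"

definition ext_sup :: "'a set \<Rightarrow> ('a \<Rightarrow> 'a \<Rightarrow> 'a option) \<Rightarrow> ('a \<Rightarrow> 'a \<Rightarrow> 'a option) \<Rightarrow> 'a ext \<Rightarrow> 'a ext \<Rightarrow> 'a ext" where
  "ext_sup L j m x y = (THE z. z \<in> ext_carrier L j m \<and> ext_le j x z \<and> ext_le j y z \<and>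
      (\<forall>w\<in>ext_carrier L j m. ext_le j x w \<and> ext_le j y w \<longrightarrow> ext_le j z w))"

definition ext_inf :: "'a set \<Rightarrow> ('a \<Rightarrow> 'a \<Rightarrow> 'a option) \<Rightarrow> ('a \<Rightarrow> 'a \<Rightarrow> 'a option) \<Rightarrow> 'a ext \<Rightarrow> 'a ext \<Rightarrow> 'a ext" where
  "ext_inf L j m x y = (THE z. z \<in> ext_carrier L j m \<and> ext_le j z x \<and> ext_le j z y \<and>
      (\<forall>w\<in>ext_carrier L j m. ext_le j w x \<and> ext_le j w y \<longrightarrow> ext_le j w z))"

definition ext_lattice_cong :: "'a set \<Rightarrow> ('a \<Rightarrow> 'a \<Rightarrow> 'a option) \<Rightarrow> ('a \<Rightarrow> 'a \<Rightarrow> 'a option) \<Rightarrow> 'a ext rel \<Rightarrow> bool" where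
  "ext_lattice_cong L j m \<theta> \<longleftrightarrow> equiv (ext_carrier L j m) \<theta> \<and>
     (\<forall>a b c d. (a, b) \<in> \<theta> \<and> (c, d) \<in> \<theta> \<longrightarrow>
        (ext_sup L j m a c, ext_sup L j m b d) \<in> \<theta> \<and> (ext_inf L j m a c, ext_inf L j m b d) \<in> \<theta>)"

definition lift_rel :: "'a rel \<Rightarrow> 'a ext rel" where
  "lift_rel E = {(Elem x, Elem y) | x y. (x, y) \<in> E}"

definition Theta :: "'a set \<Rightarrow> ('a \<Rightarrow> 'a \<Rightarrow> 'a option) \<Rightarrow> ('a \<Rightarrow> 'a \<Rightarrow> 'a option) \<Rightarrow> 'a rel \<Rightarrow> 'a ext rel" where
  "Theta L j m E = \<Inter>{\<theta>. ext_lattice_cong L j m \<theta> \<and> lift_rel E \<subseteq> \<theta>}"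

definition Con :: "'a set \<Rightarrow> ('a \<Rightarrow> 'a \<Rightarrow> 'a option) \<Rightarrow> ('a \<Rightarrow> 'a \<Rightarrow> 'a option) \<Rightarrow> 'a rel set" where
  "Con L j m = {E. equiv L E \<and> {(x, y). (Elem x, Elem y) \<in> Theta L j m E} = E}"

definition quot_join :: "'a set \<Rightarrow> ('a \<Rightarrow> 'a \<Rightarrow> 'a option) \<Rightarrow> ('a \<Rightarrow> 'a \<Rightarrow> 'a option) \<Rightarrow> 'a rel \<Rightarrow> 'a set \<Rightarrow> 'a set \<Rightarrow> 'a set option" where
  "quot_join L j m E A B =
     (let x = (SOME x. x \<in> A); y = (SOME y. y \<in> B);
          S = {z \<in> L. (Elem z, ext_sup L j m (Elem x) (Elem y)) \<in> Theta L j m E}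
      in if S = {} then None else Some S)"

definition quot_meet :: "'a set \<Rightarrow> ('a \<Rightarrow> 'a \<Rightarrow> 'a option) \<Rightarrow> ('a \<Rightarrow> 'a \<Rightarrow> 'a option) \<Rightarrow> 'a rel \<Rightarrow> 'a set \<Rightarrow> 'a set \<Rightarrow> 'a set option" where
  "quot_meet L j m E A B =
     (let x = (SOME x. x \<in> A); y = (SOME y. y \<in> B);
          S = {z \<in> L. (Elem z, ext_inf L j m (Elem x) (Elem y)) \<in> Theta L j m E}
      in if S = {} then None else Some S)"

definition phom :: "'a set \<Rightarrow> ('a \<Rightarrow> 'a \<Rightarrow> 'a option) \<Rightarrow> ('a \<Rightarrow> 'a \<Rightarrow> 'a option) \<Rightarrow>
                    'b set \<Rightarrow> ('b \<Rightarrow> 'b \<Rightarrow> 'b option) \<Rightarrow> ('b \<Rightarrow> 'b \<Rightarrow> 'b option) \<Rightarrow> ('a \<Rightarrow> 'b) \<Rightarrow> bool" where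
  "phom L1 j1 m1 L2 j2 m2 h \<longleftrightarrow> (\<forall>a\<in>L1. h a \<in> L2) \<and>
     (\<forall>a\<in>L1. \<forall>b\<in>L1. \<forall>c. (j1 a b = Some c \<longrightarrow> j2 (h a) (h b) = Some (h c)) \<and>
                         (m1 a b = Some c \<longrightarrow> m2 (h a) (h b) = Some (h c)))"

definition closed_phom :: "'a set \<Rightarrow> ('a \<Rightarrow> 'a \<Rightarrow> 'a option) \<Rightarrow> ('a \<Rightarrow> 'a \<Rightarrow> 'a option) \<Rightarrow>
                    'b set \<Rightarrow> ('b \<Rightarrow> 'b \<Rightarrow> 'b option) \<Rightarrow> ('b \<Rightarrow> 'b \<Rightarrow> 'b option) \<Rightarrow> ('a \<Rightarrow> 'b) \<Rightarrow> bool" where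
  "closed_phom L1 j1 m1 L2 j2 m2 h \<longleftrightarrow> phom L1 j1 m1 L2 j2 m2 h \<and>
     (\<forall>a\<in>L1. \<forall>b\<in>L1. (j2 (h a) (h b) \<noteq> None \<longrightarrow> j1 a b \<noteq> None) \<and>
                      (m2 (h a) (h b) \<noteq> None \<longrightarrow> m1 a b \<noteq> None))"

definition piso :: "'a set \<Rightarrow> ('a \<Rightarrow> 'a \<Rightarrow> 'a option) \<Rightarrow> ('a \<Rightarrow> 'a \<Rightarrow> 'a option) \<Rightarrow>
                    'b set \<Rightarrow> ('b \<Rightarrow> 'b \<Rightarrow> 'b option) \<Rightarrow> ('b \<Rightarrow> 'b \<Rightarrow> 'b option) \<Rightarrow> ('a \<Rightarrow> 'b) \<Rightarrow> bool" where
  "piso L1 j1 m1 L2 j2 m2 h \<longleftrightarrow> closed_phom L1 j1 m1 L2 j2 m2 h \<and> bij_betw h L1 L2"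

definition ker :: "'a set \<Rightarrow> ('a \<Rightarrow> 'b) \<Rightarrow> 'a rel" where
  "ker L h = {(x, y). x \<in> L \<and> y \<in> L \<and> h x = h y}"

end

theory Submission
  imports Defs
begin

text \<open>
  Extend h to the two-point extensions by sending the new bounds to the new bounds and
  (through \<open>ext_join\<close>, \<open>ext_meet\<close>) undefined joins and meets to them. Because h is
  closed, this extension commutes with the lattice operations of \<open>L\<^sub>1\<^sup>*\<close>, so its kernel is a
  lattice congruence of \<open>L\<^sub>1\<^sup>*\<close> containing ker h. Hence \<open>\<Theta>(ker h)\<close> restricts to ker h on
  \<open>L\<^sub>1\<close> and never relates an element of \<open>L\<^sub>1\<close> to a new bound. The operations of
  \<open>L\<^sub>1/ker h\<close> can then be computed through any representatives, and closedness of h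
  makes definedness in the quotient and in \<open>h(L\<^sub>1)\<close> agree, so the fibre map
  \<open>h(x) \<mapsto> [x]\<close> is an isomorphism.
\<close>

section \<open>Partial lattices\<close>

lemma partial_lattice_dual: "partial_lattice L j m \<Longrightarrow> partial_lattice L m j"
  unfolding partial_lattice_def by blast

context
  fixes L j m
  assumes pl: "partial_lattice L j m"
begin

lemma partial_join_closed: "a \<in> L \<Longrightarrow> b \<in> L \<Longrightarrow> j a b = Some c \<Longrightarrow> c \<in> L"
  using pl unfolding partial_lattice_def by blast

lemma partial_join_idem: "a \<in> L \<Longrightarrow> j a a = Some a"
  using pl unfolding partial_lattice_def by blast

lemma partial_join_comm: "a \<in> L \<Longrightarrow> b \<in> L \<Longrightarrow> j a b = j b a"
  using pl unfolding partial_lattice_def by blast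

lemma partial_join_assoc:
  "a \<in> L \<Longrightarrow> b \<in> L \<Longrightarrow> c \<in> L \<Longrightarrow>
     Option.bind (j a b) (\<lambda>d. j d c) = Option.bind (j b c) (j a)"
  using pl unfolding partial_lattice_def by blast

lemma partial_join_absorb: "a \<in> L \<Longrightarrow> b \<in> L \<Longrightarrow> j a b = Some a \<Longrightarrow> m a b = Some b"
  using pl unfolding partial_lattice_def by blast

lemma partial_join_upper:
  assumes "a \<in> L" "b \<in> L" "j a b = Some c"
  shows "j a c = Some c" "j b c = Some c"
proof -
  show "j a c = Some c"
    using partial_join_assoc[of a a b] partial_join_idem[of a] assms by simp
  have "j c b = Some c"
    using partial_join_assoc[of a b b] partial_join_idem[of b] assms by simp
  moreover have "c \<in> L"
    using partial_join_closed assms by blast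
  ultimately show "j b c = Some c"
    using partial_join_comm[of b c] assms by simp
qed

lemma partial_join_least:
  assumes "a \<in> L" "b \<in> L" "e \<in> L" "j a e = Some e" "j b e = Some e"
  shows "\<exists>c. j a b = Some c \<and> j c e = Some e"
  using partial_join_assoc[of a b e] assms by (cases "j a b") simp_all

end

lemma partial_le_iff_meet:
  assumes pl: "partial_lattice L j m" and ab: "a \<in> L" "b \<in> L"
  shows "j a b = Some b \<longleftrightarrow> m b a = Some a"
proof
  assume "j a b = Some b"
  then show "m b a = Some a"
    using partial_join_absorb[OF pl ab(2,1)] partial_join_comm[OF pl ab] by simp
next
  assume "m b a = Some a"
  then show "j a b = Some b"
    using partial_join_absorb[OF partial_lattice_dual[OF pl] ab]
      partial_join_comm[OF partial_lattice_dual[OF pl] ab] by simp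
qed

lemma partial_lattice_subset:
  assumes "partial_lattice L j m" and "S \<subseteq> L"
    and "\<And>a b c. a \<in> S \<Longrightarrow> b \<in> S \<Longrightarrow> j a b = Some c \<Longrightarrow> c \<in> S"
    and "\<And>a b c. a \<in> S \<Longrightarrow> b \<in> S \<Longrightarrow> m a b = Some c \<Longrightarrow> c \<in> S"
  shows "partial_lattice S j m"
  using assms unfolding partial_lattice_def subset_iff by (intro conjI) blast+

section \<open>The two-point extension\<close>

text \<open>Explicit forms of the operations of \<open>L\<^sup>*\<close>, see \<open>ext_sup_eq_ext_join\<close>.\<close>

fun ext_join :: "('a \<Rightarrow> 'a \<Rightarrow> 'a option) \<Rightarrow> 'a ext \<Rightarrow> 'a ext \<Rightarrow> 'a ext" where
  "ext_join j (Elem a) (Elem b) = case_option Top Elem (j a b)"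
| "ext_join j Bot y = y"
| "ext_join j x Bot = x"
| "ext_join j _ _ = Top"

fun ext_meet :: "('a \<Rightarrow> 'a \<Rightarrow> 'a option) \<Rightarrow> 'a ext \<Rightarrow> 'a ext \<Rightarrow> 'a ext" where
  "ext_meet m (Elem a) (Elem b) = case_option Bot Elem (m a b)"
| "ext_meet m Top y = y"
| "ext_meet m x Top = x"
| "ext_meet m _ _ = Bot"

definition is_lub_on :: "'a set \<Rightarrow> ('a \<Rightarrow> 'a \<Rightarrow> bool) \<Rightarrow> 'a \<Rightarrow> 'a \<Rightarrow> 'a \<Rightarrow> bool" where
  "is_lub_on C le x y z \<longleftrightarrow> z \<in> C \<and> le x z \<and> le y z \<and> (\<forall>w\<in>C. le x w \<and> le y w \<longrightarrow> le z w)"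

lemma the_lub_eq:
  assumes "\<And>u v. u \<in> C \<Longrightarrow> v \<in> C \<Longrightarrow> le u v \<Longrightarrow> le v u \<Longrightarrow> u = v"
    and "is_lub_on C le x y z"
  shows "(THE z. is_lub_on C le x y z) = z"
  using assms unfolding is_lub_on_def by (intro the_equality) blast+

lemma Elem_in_ext_carrier [simp]: "Elem a \<in> ext_carrier L j m \<longleftrightarrow> a \<in> L"
  by (auto simp: ext_carrier_def)

lemma Top_in_ext_carrier: "Top \<in> ext_carrier L j m \<longleftrightarrow> (\<exists>a\<in>L. \<exists>b\<in>L. j a b = None)"
  by (auto simp: ext_carrier_def op_total_def image_iff)

lemma Bot_in_ext_carrier: "Bot \<in> ext_carrier L j m \<longleftrightarrow> (\<exists>a\<in>L. \<exists>b\<in>L. m a b = None)"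
  by (auto simp: ext_carrier_def op_total_def image_iff)

lemma ext_le_Top [simp]: "ext_le j x Top"
  by (cases x) simp_all

lemma ext_le_Top_iff [simp]: "ext_le j Top y \<longleftrightarrow> y = Top"
  by (cases y) simp_all

lemma ext_le_Bot_iff [simp]: "ext_le j x Bot \<longleftrightarrow> x = Bot"
  by (cases x) simp_all

context
  fixes L j m
  assumes pl: "partial_lattice L j m"
begin

lemma ext_le_refl: "x \<in> ext_carrier L j m \<Longrightarrow> ext_le j x x"
  by (cases x) (simp_all add: partial_join_idem[OF pl])

lemma ext_le_antisym:
  "x \<in> ext_carrier L j m \<Longrightarrow> y \<in> ext_carrier L j m \<Longrightarrow> ext_le j x y \<Longrightarrow> ext_le j y x \<Longrightarrow> x = y"
  by (cases x; cases y) (auto simp: partial_join_comm[OF pl])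

lemma ext_join_is_lub:
  assumes "x \<in> ext_carrier L j m" "y \<in> ext_carrier L j m"
  shows "is_lub_on (ext_carrier L j m) (ext_le j) x y (ext_join j x y)"
proof -
  consider (elems) a b where "x = Elem a" "y = Elem b" | (bot) "x = Bot" | (bot') "y = Bot"
    | (top) "x = Top \<or> y = Top"
    by (cases x; cases y) auto
  then show ?thesis
  proof cases
    case elems
    then have ab: "a \<in> L" "b \<in> L" using assms by simp_all
    show ?thesis
    proof (cases "j a b")
      case None
      have "w = Top" if "w \<in> ext_carrier L j m" "ext_le j x w" "ext_le j y w" for w
        using that elems None partial_join_least[OF pl ab] by (cases w) auto
      then show ?thesis
        using None ab elems by (auto simp: is_lub_on_def Top_in_ext_carrier)
    next
      case (Some c)
      have "ext_le j (Elem c) w" if "w \<in> ext_carrier L j m" "ext_le j x w" "ext_le j y w" for w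
        using that elems Some partial_join_least[OF pl ab] by (cases w) auto
      then show ?thesis
        using Some ab elems partial_join_upper[OF pl ab Some] partial_join_closed[OF pl ab Some]
        by (auto simp: is_lub_on_def)
    qed
  next
    case bot
    then show ?thesis using assms by (simp add: is_lub_on_def ext_le_refl)
  next
    case bot'
    then show ?thesis
      using assms by (cases x) (simp_all add: is_lub_on_def ext_le_refl partial_join_idem[OF pl])
  next
    case top
    then have "ext_join j x y = Top" by (cases x; cases y) auto
    then show ?thesis using assms top by (auto simp: is_lub_on_def)
  qed
qed

lemma ext_meet_is_glb:
  assumes "x \<in> ext_carrier L j m" "y \<in> ext_carrier L j m"
  shows "is_lub_on (ext_carrier L j m) (\<lambda>u v. ext_le j v u) x y (ext_meet m x y)"
proof -
  note dual = partial_lattice_dual[OF pl]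
  consider (elems) a b where "x = Elem a" "y = Elem b" | (top) "x = Top" | (top') "y = Top"
    | (bot) "x = Bot \<or> y = Bot"
    by (cases x; cases y) auto
  then show ?thesis
  proof cases
    case elems
    then have ab: "a \<in> L" "b \<in> L" using assms by simp_all
    show ?thesis
    proof (cases "m a b")
      case None
      have "w = Bot" if "w \<in> ext_carrier L j m" "ext_le j w x" "ext_le j w y" for w
        using that ab elems None partial_join_least[OF dual ab]
        by (cases w) (auto simp: partial_le_iff_meet[OF pl])
      then show ?thesis
        using None ab elems by (auto simp: is_lub_on_def Bot_in_ext_carrier)
    next
      case (Some c)
      have "ext_le j w (Elem c)" if "w \<in> ext_carrier L j m" "ext_le j w x" "ext_le j w y" for w
        using that ab elems Some partial_join_least[OF dual ab] partial_join_closed[OF dual ab Some]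
        by (cases w) (auto simp: partial_le_iff_meet[OF pl])
      then show ?thesis
        using Some ab elems partial_join_upper[OF dual ab Some] partial_join_closed[OF dual ab Some]
        by (auto simp: is_lub_on_def partial_le_iff_meet[OF pl])
    qed
  next
    case top
    then show ?thesis using assms by (simp add: is_lub_on_def ext_le_refl)
  next
    case top'
    then show ?thesis
      using assms by (cases x) (simp_all add: is_lub_on_def ext_le_refl partial_join_idem[OF pl])
  next
    case bot
    then have "ext_meet m x y = Bot" by (cases x; cases y) auto
    then show ?thesis using assms bot by (auto simp: is_lub_on_def)
  qed
qed

lemma ext_sup_eq_ext_join:
  assumes "x \<in> ext_carrier L j m" "y \<in> ext_carrier L j m"
  shows "ext_sup L j m x y = ext_join j x y"
proof -
  have "ext_sup L j m x y = (THE z. is_lub_on (ext_carrier L j m) (ext_le j) x y z)"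
    by (simp add: ext_sup_def is_lub_on_def)
  also have "\<dots> = ext_join j x y"
    using assms by (intro the_lub_eq ext_join_is_lub ext_le_antisym)
  finally show ?thesis .
qed

lemma ext_inf_eq_ext_meet:
  assumes "x \<in> ext_carrier L j m" "y \<in> ext_carrier L j m"
  shows "ext_inf L j m x y = ext_meet m x y"
proof -
  have "ext_inf L j m x y = (THE z. is_lub_on (ext_carrier L j m) (\<lambda>u v. ext_le j v u) x y z)"
    by (simp add: ext_inf_def is_lub_on_def)
  also have "\<dots> = ext_meet m x y"
    using assms by (intro the_lub_eq ext_meet_is_glb ext_le_antisym)
  finally show ?thesis .
qed

end

section \<open>The kernel of a closed homomorphism\<close>

lemma closed_phom_join:
  assumes "closed_phom L1 j1 m1 L2 j2 m2 h" "a \<in> L1" "b \<in> L1"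
  shows "j2 (h a) (h b) = map_option h (j1 a b)"
  using assms unfolding closed_phom_def phom_def by (cases "j1 a b"; cases "j2 (h a) (h b)") auto

lemma closed_phom_meet:
  assumes "closed_phom L1 j1 m1 L2 j2 m2 h" "a \<in> L1" "b \<in> L1"
  shows "m2 (h a) (h b) = map_option h (m1 a b)"
  using assms unfolding closed_phom_def phom_def by (cases "m1 a b"; cases "m2 (h a) (h b)") auto

lemma map_ext_ext_join:
  assumes "\<And>a b. a \<in> L \<Longrightarrow> b \<in> L \<Longrightarrow> j' (h a) (h b) = map_option h (j a b)"
    and "set_ext x \<subseteq> L" "set_ext y \<subseteq> L"
  shows "map_ext h (ext_join j x y) = ext_join j' (map_ext h x) (map_ext h y)"
  using assms by (cases x; cases y) (auto split: option.split)

lemma map_ext_ext_meet: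
  assumes "\<And>a b. a \<in> L \<Longrightarrow> b \<in> L \<Longrightarrow> m' (h a) (h b) = map_option h (m a b)"
    and "set_ext x \<subseteq> L" "set_ext y \<subseteq> L"
  shows "map_ext h (ext_meet m x y) = ext_meet m' (map_ext h x) (map_ext h y)"
  using assms by (cases x; cases y) (auto split: option.split)

lemma set_ext_subset: "x \<in> ext_carrier L j m \<Longrightarrow> set_ext x \<subseteq> L"
  by (cases x) auto

definition ext_kernel ::
  "'a set \<Rightarrow> ('a \<Rightarrow> 'a \<Rightarrow> 'a option) \<Rightarrow> ('a \<Rightarrow> 'a \<Rightarrow> 'a option) \<Rightarrow> ('a \<Rightarrow> 'b) \<Rightarrow> 'a ext rel" where
  "ext_kernel L j m h =
     {(x, y). x \<in> ext_carrier L j m \<and> y \<in> ext_carrier L j m \<and> map_ext h x = map_ext h y}"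

context
  fixes L1 j1 m1 L2 j2 m2 and h :: "'a \<Rightarrow> 'b"
  assumes pl: "partial_lattice L1 j1 m1"
    and hom: "closed_phom L1 j1 m1 L2 j2 m2 h"
begin

lemma map_ext_ext_sup:
  assumes "x \<in> ext_carrier L1 j1 m1" "y \<in> ext_carrier L1 j1 m1"
  shows "map_ext h (ext_sup L1 j1 m1 x y) = ext_join j2 (map_ext h x) (map_ext h y)"
  unfolding ext_sup_eq_ext_join[OF pl assms]
  by (rule map_ext_ext_join[where L = L1])
    (use closed_phom_join[OF hom] set_ext_subset[OF assms(1)] set_ext_subset[OF assms(2)] in auto)

lemma map_ext_ext_inf:
  assumes "x \<in> ext_carrier L1 j1 m1" "y \<in> ext_carrier L1 j1 m1"
  shows "map_ext h (ext_inf L1 j1 m1 x y) = ext_meet m2 (map_ext h x) (map_ext h y)"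
  unfolding ext_inf_eq_ext_meet[OF pl assms]
  by (rule map_ext_ext_meet[where L = L1])
    (use closed_phom_meet[OF hom] set_ext_subset[OF assms(1)] set_ext_subset[OF assms(2)] in auto)

lemma ext_lattice_cong_ext_kernel: "ext_lattice_cong L1 j1 m1 (ext_kernel L1 j1 m1 h)"
  unfolding ext_lattice_cong_def
proof (intro conjI allI impI)
  show "equiv (ext_carrier L1 j1 m1) (ext_kernel L1 j1 m1 h)"
    unfolding equiv_def refl_on_def sym_def trans_def ext_kernel_def by auto
next
  fix a b c d
  assume "(a, b) \<in> ext_kernel L1 j1 m1 h \<and> (c, d) \<in> ext_kernel L1 j1 m1 h"
  then have C: "a \<in> ext_carrier L1 j1 m1" "b \<in> ext_carrier L1 j1 m1"
      "c \<in> ext_carrier L1 j1 m1" "d \<in> ext_carrier L1 j1 m1"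
    and eq: "map_ext h a = map_ext h b" "map_ext h c = map_ext h d"
    by (auto simp: ext_kernel_def)
  show "(ext_sup L1 j1 m1 a c, ext_sup L1 j1 m1 b d) \<in> ext_kernel L1 j1 m1 h"
    using C eq map_ext_ext_sup ext_join_is_lub[OF pl]
    by (simp add: ext_kernel_def ext_sup_eq_ext_join[OF pl] is_lub_on_def)
  show "(ext_inf L1 j1 m1 a c, ext_inf L1 j1 m1 b d) \<in> ext_kernel L1 j1 m1 h"
    using C eq map_ext_ext_inf ext_meet_is_glb[OF pl]
    by (simp add: ext_kernel_def ext_inf_eq_ext_meet[OF pl] is_lub_on_def)
qed

lemma Theta_ker_subset: "Theta L1 j1 m1 (ker L1 h) \<subseteq> ext_kernel L1 j1 m1 h"
proof -
  have "lift_rel (ker L1 h) \<subseteq> ext_kernel L1 j1 m1 h"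
    by (auto simp: lift_rel_def ker_def ext_kernel_def)
  then show ?thesis
    unfolding Theta_def using ext_lattice_cong_ext_kernel by blast
qed

lemma Theta_ker_Elem_iff:
  "(Elem x, y) \<in> Theta L1 j1 m1 (ker L1 h) \<longleftrightarrow> (\<exists>w. y = Elem w \<and> (x, w) \<in> ker L1 h)"
proof
  assume "(Elem x, y) \<in> Theta L1 j1 m1 (ker L1 h)"
  then have "(Elem x, y) \<in> ext_kernel L1 j1 m1 h"
    using Theta_ker_subset by blast
  then show "\<exists>w. y = Elem w \<and> (x, w) \<in> ker L1 h"
    by (cases y) (auto simp: ext_kernel_def ker_def)
next
  assume "\<exists>w. y = Elem w \<and> (x, w) \<in> ker L1 h"
  then show "(Elem x, y) \<in> Theta L1 j1 m1 (ker L1 h)"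
    unfolding Theta_def lift_rel_def by blast
qed

lemma ker_in_Con: "ker L1 h \<in> Con L1 j1 m1"
proof -
  have "equiv L1 (ker L1 h)"
    unfolding equiv_def refl_on_def sym_def trans_def ker_def by auto
  then show ?thesis
    unfolding Con_def using Theta_ker_Elem_iff by auto
qed

lemma partial_lattice_image:
  assumes "partial_lattice L2 j2 m2"
  shows "partial_lattice (h ` L1) j2 m2"
proof (rule partial_lattice_subset[OF assms])
  show "h ` L1 \<subseteq> L2"
    using hom unfolding closed_phom_def phom_def by blast
  show "c \<in> h ` L1" if ab: "a \<in> h ` L1" "b \<in> h ` L1" and c: "j2 a b = Some c" for a b c
  proof -
    obtain x y where xy: "x \<in> L1" "y \<in> L1" and "a = h x" "b = h y" using ab by blast
    then obtain w where "j1 x y = Some w" "c = h w"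
      using c closed_phom_join[OF hom xy] by auto
    then show ?thesis using partial_join_closed[OF pl xy] by blast
  qed
  show "c \<in> h ` L1" if ab: "a \<in> h ` L1" "b \<in> h ` L1" and c: "m2 a b = Some c" for a b c
  proof -
    obtain x y where xy: "x \<in> L1" "y \<in> L1" and "a = h x" "b = h y" using ab by blast
    then obtain w where "m1 x y = Some w" "c = h w"
      using c closed_phom_meet[OF hom xy] by auto
    then show ?thesis using partial_join_closed[OF partial_lattice_dual[OF pl] xy] by blast
  qed
qed

end

section \<open>The quotient by the kernel\<close>

lemma ker_Image: "x \<in> L \<Longrightarrow> ker L h `` {x} = L \<inter> h -` {h x}"
  by (auto simp: ker_def)

definition quot_op ::
  "'a set \<Rightarrow> 'a ext rel \<Rightarrow> ('a ext \<Rightarrow> 'a ext \<Rightarrow> 'a ext) \<Rightarrow> 'a set \<Rightarrow> 'a set \<Rightarrow> 'a set option" where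
  "quot_op L \<theta> F A B =
     (let x = (SOME x. x \<in> A); y = (SOME y. y \<in> B);
          S = {z \<in> L. (Elem z, F (Elem x) (Elem y)) \<in> \<theta>}
      in if S = {} then None else Some S)"

lemma quot_join_eq_quot_op: "quot_join L j m E = quot_op L (Theta L j m E) (ext_sup L j m)"
  by (simp add: fun_eq_iff quot_join_def quot_op_def)

lemma quot_meet_eq_quot_op: "quot_meet L j m E = quot_op L (Theta L j m E) (ext_inf L j m)"
  by (simp add: fun_eq_iff quot_meet_def quot_op_def)

text \<open>The representatives picked by SOME are irrelevant since h identifies them with x and y.\<close>

lemma quot_op_fibers:
  assumes pl: "partial_lattice L1 j1 m1" and hom: "closed_phom L1 j1 m1 L2 j2 m2 h"
    and F: "\<And>a b. a \<in> L1 \<Longrightarrow> b \<in> L1 \<Longrightarrow> F (Elem a) (Elem b) = case_option T Elem (p a b)"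
    and T: "\<And>a. T \<noteq> Elem a"
    and p_closed: "\<And>a b c. a \<in> L1 \<Longrightarrow> b \<in> L1 \<Longrightarrow> p a b = Some c \<Longrightarrow> c \<in> L1"
    and p_hom: "\<And>a b. a \<in> L1 \<Longrightarrow> b \<in> L1 \<Longrightarrow> q (h a) (h b) = map_option h (p a b)"
    and x: "x \<in> L1" and y: "y \<in> L1"
  shows "quot_op L1 (Theta L1 j1 m1 (ker L1 h)) F (L1 \<inter> h -` {h x}) (L1 \<inter> h -` {h y})
           = map_option (\<lambda>b. L1 \<inter> h -` {b}) (q (h x) (h y))"
proof -
  define x' where "x' = (SOME x'. x' \<in> L1 \<inter> h -` {h x})"
  define y' where "y' = (SOME y'. y' \<in> L1 \<inter> h -` {h y})"
  have x': "x' \<in> L1" "h x' = h x"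
    using someI[of "\<lambda>x'. x' \<in> L1 \<inter> h -` {h x}" x] x unfolding x'_def by auto
  have y': "y' \<in> L1" "h y' = h y"
    using someI[of "\<lambda>y'. y' \<in> L1 \<inter> h -` {h y}" y] y unfolding y'_def by auto
  define S where "S = {z \<in> L1. (Elem z, F (Elem x') (Elem y')) \<in> Theta L1 j1 m1 (ker L1 h)}"
  have lhs: "quot_op L1 (Theta L1 j1 m1 (ker L1 h)) F (L1 \<inter> h -` {h x}) (L1 \<inter> h -` {h y})
               = (if S = {} then None else Some S)"
    unfolding quot_op_def S_def x'_def y'_def Let_def by simp
  have q: "q (h x) (h y) = map_option h (p x' y')"
    using p_hom[OF x'(1) y'(1)] x'(2) y'(2) by simp
  show ?thesis
  proof (cases "p x' y'")
    case None
    then have "S = {}"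
      using T F[OF x'(1) y'(1)] Theta_ker_Elem_iff[OF pl hom] unfolding S_def by auto
    then show ?thesis using lhs q None by simp
  next
    case (Some w)
    have w: "w \<in> L1" using p_closed[OF x'(1) y'(1) Some] .
    have "S = L1 \<inter> h -` {h w}"
      using w F[OF x'(1) y'(1)] Some Theta_ker_Elem_iff[OF pl hom] unfolding S_def ker_def by auto
    then show ?thesis using lhs q Some w by auto
  qed
qed

lemma quot_join_fibers:
  assumes pl: "partial_lattice L1 j1 m1" and hom: "closed_phom L1 j1 m1 L2 j2 m2 h"
    and "x \<in> L1" "y \<in> L1"
  shows "quot_join L1 j1 m1 (ker L1 h) (L1 \<inter> h -` {h x}) (L1 \<inter> h -` {h y})
           = map_option (\<lambda>b. L1 \<inter> h -` {b}) (j2 (h x) (h y))"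
  unfolding quot_join_eq_quot_op
  using assms(3,4)
  by (intro quot_op_fibers[where T = Top and p = j1 and q = j2, OF pl hom _ _
        partial_join_closed[OF pl] closed_phom_join[OF hom]])
    (simp_all add: ext_sup_eq_ext_join[OF pl])

lemma quot_meet_fibers:
  assumes pl: "partial_lattice L1 j1 m1" and hom: "closed_phom L1 j1 m1 L2 j2 m2 h"
    and "x \<in> L1" "y \<in> L1"
  shows "quot_meet L1 j1 m1 (ker L1 h) (L1 \<inter> h -` {h x}) (L1 \<inter> h -` {h y})
           = map_option (\<lambda>b. L1 \<inter> h -` {b}) (m2 (h x) (h y))"
  unfolding quot_meet_eq_quot_op
  using assms(3,4)
  by (intro quot_op_fibers[where T = Bot and p = m1 and q = m2, OF pl hom _ _
        partial_join_closed[OF partial_lattice_dual[OF pl]] closed_phom_meet[OF hom]])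
    (simp_all add: ext_inf_eq_ext_meet[OF pl])

lemma piso_image_quotient:
  assumes pl: "partial_lattice L1 j1 m1" and hom: "closed_phom L1 j1 m1 L2 j2 m2 h"
  shows "piso (h ` L1) j2 m2 (L1 // ker L1 h) (quot_join L1 j1 m1 (ker L1 h))
           (quot_meet L1 j1 m1 (ker L1 h)) (\<lambda>b. L1 \<inter> h -` {b})"
proof -
  let ?\<phi> = "\<lambda>b. L1 \<inter> h -` {b}"
  have bij: "bij_betw ?\<phi> (h ` L1) (L1 // ker L1 h)"
  proof (rule bij_betw_imageI)
    show "inj_on ?\<phi> (h ` L1)"
      by (rule inj_onI) blast
    show "?\<phi> ` h ` L1 = L1 // ker L1 h"
      unfolding quotient_def by (auto simp: ker_Image)
  qed
  have ops: "quot_join L1 j1 m1 (ker L1 h) (?\<phi> a) (?\<phi> b) = map_option ?\<phi> (j2 a b)"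
    "quot_meet L1 j1 m1 (ker L1 h) (?\<phi> a) (?\<phi> b) = map_option ?\<phi> (m2 a b)"
    if ab: "a \<in> h ` L1" "b \<in> h ` L1" for a b
  proof -
    obtain x y where "x \<in> L1" "y \<in> L1" "a = h x" "b = h y"
      using ab by blast
    then show "quot_join L1 j1 m1 (ker L1 h) (?\<phi> a) (?\<phi> b) = map_option ?\<phi> (j2 a b)"
      "quot_meet L1 j1 m1 (ker L1 h) (?\<phi> a) (?\<phi> b) = map_option ?\<phi> (m2 a b)"
      using quot_join_fibers[OF pl hom] quot_meet_fibers[OF pl hom] by simp_all
  qed
  show ?thesis
    unfolding piso_def closed_phom_def phom_def
    by (intro conjI ballI allI impI bij; simp add: ops bij_betw_apply[OF bij])
qed

theorem mainTheorem8:
  fixes L1 :: "'a set" and j1 m1 :: "'a \<Rightarrow> 'a \<Rightarrow> 'a option"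
    and L2 :: "'b set" and j2 m2 :: "'b \<Rightarrow> 'b \<Rightarrow> 'b option"
    and h :: "'a \<Rightarrow> 'b"
  assumes "partial_lattice L1 j1 m1"
    and "partial_lattice L2 j2 m2"
    and "closed_phom L1 j1 m1 L2 j2 m2 h"
  shows "ker L1 h \<in> Con L1 j1 m1 \<and>
    ((Bot \<in> ext_carrier L1 j1 m1 \<longrightarrow> Theta L1 j1 m1 (ker L1 h) `` {Bot} = {Bot}) \<and>
     (Top \<in> ext_carrier L1 j1 m1 \<longrightarrow> Theta L1 j1 m1 (ker L1 h) `` {Top} = {Top}) \<longrightarrow>
       partial_lattice (h ` L1) j2 m2 \<and>
       (\<exists>\<phi>. (\<forall>x\<in>L1. \<phi> (h x) = ker L1 h `` {x}) \<and>
            piso (h ` L1) j2 m2 (L1 // ker L1 h)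
                 (quot_join L1 j1 m1 (ker L1 h)) (quot_meet L1 j1 m1 (ker L1 h)) \<phi>))"
proof -
  let ?\<phi> = "\<lambda>b. L1 \<inter> h -` {b}"
  have "\<forall>x\<in>L1. ?\<phi> (h x) = ker L1 h `` {x}"
    by (simp add: ker_Image)
  moreover note ker_in_Con[OF assms(1,3)] partial_lattice_image[OF assms(1,3,2)]
    piso_image_quotient[OF assms(1,3)]
  ultimately show ?thesis
    by (intro conjI impI exI[of _ ?\<phi>])
qed

end
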